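(* For $m,n\in \mathbb{Z}_{>1}$, \begin{align*} \zeta(m,n)=P(m,n), \end{align*} where \begin{align*} P(m,n):=&\sum^{m-1}_{i=0}(-1)^{i}\binom{n+i-1}{i}\zeta(n+i)\zeta_{\sqcup\!\sqcup}(m-i)\\ &\ +(-1)^{m}\sum^{n-1}_{j=0}\binom{m+j-1}{j}\Bigl\{\zeta(m+j)\zeta_{\sqcup\!\sqcup}(n-j)-\zeta^{\star}(n-j,m+j)\Bigr\}. \end{align*}
   Context: For $n\in\mathbb{Z}_{>0}$, $m\in\mathbb{Z}_{>1}$: $\zeta(m)=\sum_{k\ge1}k^{-m}$, the double zeta value $\zeta(n,m)=\sum_{0<k_1<k_2}k_1^{-n}k_2^{-m}$, and the double zeta star value $\zeta^\star(n,m)=\sum_{0<k_1\le k_2}k_1^{-n}k_2^{-m}=\zeta(n,m)+\zeta(m+n)$. The shuffle regularized values $\zeta_{\sqcup\!\sqcup}(m)\in\mathbb{R}[T]$ (for $m\in\mathbb{Z}_{>0}$) are defined as follows: as $\epsilon\to0$, $\sum_{k>0}(1-\epsilon)^k/k^m\sim c_0+c_1(-\log\epsilon)$ with $c_i\in\mathbb{R}$, and $\zeta_{\sqcup\!\sqcup}(m):=c_0+c_1T$. In particular $\zeta_{\sqcup\!\sqcup}(1)=T$ and $\zeta_{\sqcup\!\sqcup}(m)=\zeta(m)$ for $m>1$. The identity is an equality in $\mathbb{R}[T]$ (the $T$-terms cancel). *)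

theory Defs
  imports "HOL-Analysis.Analysis" "HOL-Computational_Algebra.Polynomial"
begin

definition zeta :: "nat \<Rightarrow> real" where
  "zeta m = (\<Sum>k. 1 / real (Suc k) ^ m)"

definition double_zeta :: "nat \<Rightarrow> nat \<Rightarrow> real" where
  "double_zeta n m = infsum (\<lambda>(k1, k2). 1 / (real k1 ^ n * real k2 ^ m))
      {(k1::nat, k2::nat). 0 < k1 \<and> k1 < k2}"

definition double_zeta_star :: "nat \<Rightarrow> nat \<Rightarrow> real" where
  "double_zeta_star n m = infsum (\<lambda>(k1, k2). 1 / (real k1 ^ n * real k2 ^ m))
      {(k1::nat, k2::nat). 0 < k1 \<and> k1 \<le> k2}"

text \<open>Shuffle regularized zeta value in R[T]: the polynomial c0 + c1 T (degree at most 1)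
  such that sum_{k>0} (1-eps)^k / k^m - (c0 + c1 (-log eps)) tends to 0 as eps -> 0+.\<close>
definition zeta_sh :: "nat \<Rightarrow> real poly" where
  "zeta_sh m = (THE p. degree p \<le> 1 \<and>
      ((\<lambda>\<epsilon>::real. (\<Sum>k. (1 - \<epsilon>) ^ Suc k / real (Suc k) ^ m) - poly p (- ln \<epsilon>))
        \<longlongrightarrow> 0) (at_right 0))"

end

theory Submission
  imports Defs "HOL-Real_Asymp.Real_Asymp"
begin

text \<open>Write \<open>k\<^sub>1 = k\<close> and \<open>k\<^sub>2 = k + d\<close>. The partial fraction expansion of
  \<open>1 / (k^m (k + d)^n)\<close> in \<open>k\<close> splits \<open>\<zeta>(m, n)\<close> into products \<open>\<zeta>(n + i) \<zeta>(m - i)\<close>,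
  double zeta values \<open>\<zeta>(m + j, n - j)\<close> and, from the two simple-pole terms, the sum of
  \<open>(1/k - 1/(k + d)) / d^(m+n-1)\<close>, which telescopes in \<open>k\<close> to \<open>\<zeta>\<^sup>\<star>(1, m + n - 1)\<close>.
  On the polynomial side \<open>\<zeta>\<^sub>\<sqcup>\<^sub>\<sqcup>(1) = T\<close> and \<open>\<zeta>\<^sub>\<sqcup>\<^sub>\<sqcup>(p) = \<zeta>(p)\<close> for \<open>p \<ge> 2\<close>; the two
  \<open>T\<close>-terms cancel, and the harmonic product \<open>\<zeta>(p) \<zeta>(q) = \<zeta>(p, q) + \<zeta>\<^sup>\<star>(q, p)\<close> turns the
  constant terms into the same expansion.\<close>

lemma sum_choose_power_telescope:
  fixes w :: real
  shows "(\<Sum>j<n. real ((M + j) choose j) * w ^ j) - (1 - w) * (\<Sum>j<n. real ((Suc M + j) choose j) * w ^ j)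
     = real ((M + n) choose Suc M) * w ^ n"
proof (induction n)
  case (Suc n)
  have "(Suc M + n) choose n = ((M + n) choose n) + ((M + n) choose Suc M)"
  proof (cases n)
    case (Suc k)
    then show ?thesis
      using binomial_symmetric[of k "M + n"] by (simp add: choose_reduce_nat)
  qed simp
  moreover have "(Suc M + n) choose n = (M + Suc n) choose Suc M"
    using binomial_symmetric[of n "Suc M + n"] by simp
  ultimately show ?case
    using Suc.IH by (simp add: algebra_simps)
qed simp

text \<open>In independent trials with outcome probabilities \<open>v\<close> and \<open>w\<close>, either the \<open>n\<close>-th
  \<open>w\<close>-outcome comes first (after \<open>i \<le> M\<close> \<open>v\<close>-outcomes) or the \<open>Suc M\<close>-th \<open>v\<close>-outcome
  does (after \<open>j < n\<close> \<open>w\<close>-outcomes).\<close>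
lemma sum_choose_power_eq_1:
  fixes v w :: real
  assumes "v + w = 1" and "n \<ge> 1"
  shows "(\<Sum>i<Suc M. real ((n + i - 1) choose i) * v ^ i * w ^ n)
       + (\<Sum>j<n. real ((M + j) choose j) * v ^ Suc M * w ^ j) = 1"
proof (induction M)
  case 0
  have "v = 1 - w" using assms(1) by simp
  hence "(\<Sum>j<n. real ((0 + j) choose j) * v ^ Suc 0 * w ^ j) = 1 - w ^ n"
    by (simp add: one_diff_power_eq sum_distrib_left)
  thus ?case by simp
next
  case (Suc M)
  have "(\<Sum>j<n. real ((M + j) choose j) * v ^ Suc M * w ^ j)
        - (\<Sum>j<n. real ((Suc M + j) choose j) * v ^ Suc (Suc M) * w ^ j)
      = v ^ Suc M * ((\<Sum>j<n. real ((M + j) choose j) * w ^ j)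
          - v * (\<Sum>j<n. real ((Suc M + j) choose j) * w ^ j))"
    by (simp add: sum_distrib_left algebra_simps)
  also have "\<dots> = v ^ Suc M * ((\<Sum>j<n. real ((M + j) choose j) * w ^ j)
          - (1 - w) * (\<Sum>j<n. real ((Suc M + j) choose j) * w ^ j))"
    using assms(1) by (simp add: eq_diff_eq)
  also have "\<dots> = v ^ Suc M * (real ((M + n) choose Suc M) * w ^ n)"
    by (simp only: sum_choose_power_telescope)
  finally have "(\<Sum>j<n. real ((M + j) choose j) * v ^ Suc M * w ^ j)
        - (\<Sum>j<n. real ((Suc M + j) choose j) * v ^ Suc (Suc M) * w ^ j)
      = real ((M + n) choose Suc M) * v ^ Suc M * w ^ n"
    by simp
  moreover have "n + Suc M - 1 = M + n" using assms(2) by simp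
  ultimately show ?case
    using Suc.IH by (simp only: sum.lessThan_Suc)
qed

lemma partial_fraction:
  fixes x d :: real
  assumes x: "x > 0" and d: "d > 0" and m: "m \<ge> 1" and n: "n \<ge> 1"
  shows "1 / (x ^ m * (x + d) ^ n) =
    (\<Sum>i<m. (-1) ^ i * real ((n + i - 1) choose i) / (d ^ (n + i) * x ^ (m - i)))
    + (-1) ^ m * (\<Sum>j<n. real ((m + j - 1) choose j) / (d ^ (m + j) * (x + d) ^ (n - j)))"
proof -
  define v where "v = - x / d"
  define w where "w = (x + d) / d"
  have power_v: "v ^ i = (-1) ^ i * x ^ i / d ^ i" for i
    unfolding v_def by (simp add: power_divide power_minus')
  have power_w: "w ^ j = (x + d) ^ j / d ^ j" for j
    unfolding w_def by (simp add: power_divide)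
  have "v + w = 1" using d by (simp add: v_def w_def field_simps)
  with m n have "1 = (\<Sum>i<m. real ((n + i - 1) choose i) * v ^ i * w ^ n)
       + (\<Sum>j<n. real ((m + j - 1) choose j) * v ^ m * w ^ j)"
    using sum_choose_power_eq_1[of v w n "m - 1"] by simp
  hence "1 / (x ^ m * (x + d) ^ n)
      = ((\<Sum>i<m. real ((n + i - 1) choose i) * v ^ i * w ^ n)
       + (\<Sum>j<n. real ((m + j - 1) choose j) * v ^ m * w ^ j)) / (x ^ m * (x + d) ^ n)"
    by (rule arg_cong)
  also have "\<dots> = (\<Sum>i<m. real ((n + i - 1) choose i) * v ^ i * w ^ n / (x ^ m * (x + d) ^ n))
       + (\<Sum>j<n. real ((m + j - 1) choose j) * v ^ m * w ^ j / (x ^ m * (x + d) ^ n))"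
    by (simp only: add_divide_distrib sum_divide_distrib)
  also have "(\<Sum>i<m. real ((n + i - 1) choose i) * v ^ i * w ^ n / (x ^ m * (x + d) ^ n))
      = (\<Sum>i<m. (-1) ^ i * real ((n + i - 1) choose i) / (d ^ (n + i) * x ^ (m - i)))"
  proof (rule sum.cong)
    fix i assume "i \<in> {..<m}"
    hence "x ^ m = x ^ i * x ^ (m - i)" by (simp flip: power_add)
    thus "real ((n + i - 1) choose i) * v ^ i * w ^ n / (x ^ m * (x + d) ^ n)
        = (-1) ^ i * real ((n + i - 1) choose i) / (d ^ (n + i) * x ^ (m - i))"
      using x d by (simp add: power_v power_w power_add field_simps)
  qed simp
  also have "(\<Sum>j<n. real ((m + j - 1) choose j) * v ^ m * w ^ j / (x ^ m * (x + d) ^ n))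
      = (-1) ^ m * (\<Sum>j<n. real ((m + j - 1) choose j) / (d ^ (m + j) * (x + d) ^ (n - j)))"
    unfolding sum_distrib_left
  proof (rule sum.cong)
    fix j assume "j \<in> {..<n}"
    hence "(x + d) ^ n = (x + d) ^ j * (x + d) ^ (n - j)" by (simp flip: power_add)
    thus "real ((m + j - 1) choose j) * v ^ m * w ^ j / (x ^ m * (x + d) ^ n)
        = (-1) ^ m * (real ((m + j - 1) choose j) / (d ^ (m + j) * (x + d) ^ (n - j)))"
      using x d by (simp add: power_v power_w power_add field_simps)
  qed simp
  finally show ?thesis .
qed

lemma partial_fraction_split:
  fixes d k :: nat
  assumes "d > 0" "k > 0"
  shows "1 / (real k ^ Suc a * real (k + d) ^ Suc b) =
    (\<Sum>i<a. (-1) ^ i * real ((b + i) choose i) * (1 / (real d ^ (Suc b + i) * real k ^ (Suc a - i))))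
    + (-1) ^ Suc a * (\<Sum>j<b. real ((a + j) choose j) * (1 / (real d ^ (Suc a + j) * real (k + d) ^ (Suc b - j))))
    + (-1) ^ a * real ((a + b) choose a) * ((1 / real k - 1 / real (k + d)) / real d ^ (a + b + 1))"
proof -
  have "(a + b) choose b = (a + b) choose a"
    using binomial_symmetric[of b "a + b"] by simp
  moreover have "(-1) ^ a * real ((a + b) choose a) / (real d ^ (a + b + 1) * real k)
        + (-1) ^ Suc a * (real ((a + b) choose a) / (real d ^ (a + b + 1) * real (k + d)))
      = (-1) ^ a * real ((a + b) choose a) * ((1 / real k - 1 / real (k + d)) / real d ^ (a + b + 1))"
  proof -
    have "s * c / (D * x) + (- s) * (c / (D * y)) = s * c * ((1 / x - 1 / y) / D)"
      if "D \<noteq> 0" "x \<noteq> 0" "y \<noteq> 0" for s c D x y :: real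
      using that by (simp add: field_simps)
    thus ?thesis using assms by simp
  qed
  ultimately show ?thesis
    using partial_fraction[of "real k" "real d" "Suc a" "Suc b"] assms
    by (simp add: algebra_simps)
qed

lemma poly_linear_tendsto_0_at_top_imp_0:
  fixes p :: "real poly"
  assumes "degree p \<le> 1" and lim: "(poly p \<longlongrightarrow> 0) at_top"
  shows "p = 0"
proof -
  obtain a b where p: "p = [:a, b:]"
  proof
    show "p = [:coeff p 0, coeff p 1:]"
      using assms(1) by (auto simp: poly_eq_iff coeff_pCons split: nat.split intro: coeff_eq_0)
  qed
  have "filterlim (\<lambda>t::real. t + 1) at_top at_top" by real_asymp
  with lim have "((\<lambda>t. poly p (t + 1) - poly p t) \<longlongrightarrow> 0 - 0) at_top"
    by (intro tendsto_diff) (auto simp: o_def dest: filterlim_compose)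
  hence "((\<lambda>t::real. b) \<longlongrightarrow> 0) at_top" by (simp add: p algebra_simps)
  hence b: "b = 0" by (simp add: tendsto_const_iff)
  hence "poly p = (\<lambda>t. a)" by (simp add: p fun_eq_iff)
  with lim have "((\<lambda>t::real. a) \<longlongrightarrow> 0) at_top" by simp
  hence "a = 0" by (simp add: tendsto_const_iff)
  with b show ?thesis by (simp add: p)
qed

lemma zeta_sh_eqI:
  assumes "degree p \<le> 1"
    and "((\<lambda>\<epsilon>::real. (\<Sum>k. (1 - \<epsilon>) ^ Suc k / real (Suc k) ^ m) - poly p (- ln \<epsilon>)) \<longlongrightarrow> 0) (at_right 0)"
  shows "zeta_sh m = p"
  unfolding zeta_sh_def
proof (rule the_equality)
  fix q :: "real poly"
  assume q: "degree q \<le> 1 \<and> ((\<lambda>\<epsilon>::real. (\<Sum>k. (1 - \<epsilon>) ^ Suc k / real (Suc k) ^ m) - poly q (- ln \<epsilon>)) \<longlongrightarrow> 0) (at_right 0)"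
  have "((\<lambda>\<epsilon>::real. poly (p - q) (- ln \<epsilon>)) \<longlongrightarrow> 0 - 0) (at_right 0)"
    using tendsto_diff[OF conjunct2[OF q] assms(2)] by (simp add: poly_diff)
  moreover have "filterlim (\<lambda>t::real. exp (- t)) (at_right 0) at_top" by real_asymp
  ultimately have "((\<lambda>t. poly (p - q) (- ln (exp (- t)))) \<longlongrightarrow> 0) at_top"
    by (auto simp: o_def poly_diff dest: filterlim_compose)
  moreover have "poly (p - q) = (\<lambda>t. poly p t - poly q t)" by (simp add: fun_eq_iff)
  ultimately have "(poly (p - q) \<longlongrightarrow> 0) at_top" by simp
  moreover have "degree (p - q) \<le> 1" using assms(1) q by (meson degree_diff_le)
  ultimately show "q = p" using poly_linear_tendsto_0_at_top_imp_0 by fastforce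
qed (use assms in blast)

lemma zeta_sh_1: "zeta_sh 1 = [:0, 1:]"
proof (rule zeta_sh_eqI)
  have "eventually (\<lambda>\<epsilon>::real. \<epsilon> \<in> {0<..<1}) (at_right 0)"
    by (intro eventually_at_right_real) auto
  hence "eventually (\<lambda>\<epsilon>::real. (\<Sum>k. (1 - \<epsilon>) ^ Suc k / real (Suc k) ^ 1) - poly [:0, 1:] (- ln \<epsilon>) = 0) (at_right 0)"
  proof eventually_elim
    case (elim \<epsilon>)
    have "(\<lambda>k. (1 - \<epsilon>) ^ k / real k) sums (- ln \<epsilon>)"
      using sums_minus[OF ln_series'[of "\<epsilon> - 1"]] elim by simp
    hence "(\<lambda>k. (1 - \<epsilon>) ^ Suc k / real (Suc k)) sums (- ln \<epsilon>)"
      by (subst sums_Suc_iff) simp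
    thus ?case by (simp add: sums_iff)
  qed
  thus "((\<lambda>\<epsilon>::real. (\<Sum>k. (1 - \<epsilon>) ^ Suc k / real (Suc k) ^ 1) - poly [:0, 1:] (- ln \<epsilon>)) \<longlongrightarrow> 0) (at_right 0)"
    by (rule tendsto_eventually)
qed simp

lemma summable_inverse_Suc_power:
  assumes "m \<ge> 2"
  shows "summable (\<lambda>k. 1 / real (Suc k) ^ m)"
proof -
  have "summable (\<lambda>k. inverse (real k ^ m))"
    using inverse_power_summable[OF assms] by simp
  thus ?thesis by (subst (asm) summable_Suc_iff [symmetric]) (simp add: divide_inverse)
qed

text \<open>For \<open>m \<ge> 2\<close> no regularisation is needed: the power series converges uniformly on
  \<open>[0, 1]\<close>, so its limit at \<open>1\<close> is \<open>\<zeta>(m)\<close>.\<close>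
lemma zeta_sh_eq_const:
  assumes "m \<ge> 2"
  shows "zeta_sh m = [:zeta m:]"
proof (rule zeta_sh_eqI)
  define h where "h x = (\<Sum>k. x ^ Suc k / real (Suc k) ^ m)" for x :: real
  have "uniform_limit {0..1} (\<lambda>n x. \<Sum>k<n. x ^ Suc k / real (Suc k) ^ m) h sequentially"
    unfolding h_def
  proof (rule Weierstrass_m_test)
    show "summable (\<lambda>k. 1 / real (Suc k) ^ m)" using assms by (rule summable_inverse_Suc_power)
    fix k :: nat and x :: real assume "x \<in> {0..1}"
    then have "0 \<le> x ^ Suc k" "x ^ Suc k \<le> 1" using power_le_one[of x "Suc k"] by auto
    then show "norm (x ^ Suc k / real (Suc k) ^ m) \<le> 1 / real (Suc k) ^ m"
      by (simp add: divide_right_mono)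
  qed
  hence "continuous_on {0..1} h"
    by (rule uniform_limit_theorem[rotated]) (auto intro!: always_eventually continuous_intros)
  hence "(h \<longlongrightarrow> h 1) (at 1 within {0..1})"
    by (simp add: continuous_on_def)
  moreover have "filterlim (\<lambda>\<epsilon>::real. 1 - \<epsilon>) (at 1 within {0..1}) (at_right 0)"
  proof (subst filterlim_at, intro conjI)
    have "eventually (\<lambda>\<epsilon>::real. \<epsilon> \<in> {0<..<1}) (at_right 0)"
      by (intro eventually_at_right_real) auto
    thus "eventually (\<lambda>\<epsilon>::real. 1 - \<epsilon> \<in> {0..1} \<and> 1 - \<epsilon> \<noteq> 1) (at_right 0)"
      by eventually_elim auto
    show "((\<lambda>\<epsilon>::real. 1 - \<epsilon>) \<longlongrightarrow> 1) (at_right 0)"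
      by (rule tendsto_eq_intros refl)+ simp
  qed
  ultimately have "((\<lambda>\<epsilon>. h (1 - \<epsilon>)) \<longlongrightarrow> zeta m) (at_right 0)"
    by (auto simp: o_def h_def zeta_def dest: filterlim_compose)
  thus "((\<lambda>\<epsilon>::real. (\<Sum>k. (1 - \<epsilon>) ^ Suc k / real (Suc k) ^ m) - poly [:zeta m:] (- ln \<epsilon>)) \<longlongrightarrow> 0) (at_right 0)"
    by (simp add: h_def LIM_zero)
qed simp

lemma has_sum_sum:
  fixes f :: "'i \<Rightarrow> 'a \<Rightarrow> 'b :: topological_comm_monoid_add"
  assumes "finite I" and "\<And>i. i \<in> I \<Longrightarrow> (f i has_sum s i) A"
  shows "((\<lambda>x. \<Sum>i\<in>I. f i x) has_sum (\<Sum>i\<in>I. s i)) A"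
  using assms by (induction I rule: finite_induct) (auto intro: has_sum_add)

lemma zeta_has_sum:
  assumes "p \<ge> 2"
  shows "((\<lambda>k::nat. 1 / real k ^ p) has_sum zeta p) {0<..}"
proof -
  have s: "summable (\<lambda>k. 1 / real (Suc k) ^ p)" using assms by (rule summable_inverse_Suc_power)
  hence "((\<lambda>k. 1 / real (Suc k) ^ p) has_sum zeta p) UNIV"
    unfolding zeta_def by (intro norm_summable_imp_has_sum summable_sums) auto
  moreover have "bij_betw Suc UNIV {0<..}"
    by (rule bij_betwI[where g="\<lambda>k. k - 1"]) auto
  ultimately show ?thesis
    using has_sum_reindex_bij_betw[of Suc UNIV "{0<..}" "\<lambda>k::nat. 1 / real k ^ p"] by simp
qed

lemma zeta_mult_zeta_has_sum:
  assumes "p \<ge> 2" "q \<ge> 2"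
  shows "((\<lambda>(a, b). 1 / (real a ^ q * real b ^ p)) has_sum zeta q * zeta p) ({0<..} \<times> {0<..})"
proof -
  have fibre: "((\<lambda>b. 1 / (real a ^ q * real b ^ p)) has_sum (1 / real a ^ q * zeta p)) {0<..}"
    for a :: nat
    using has_sum_cmult_right[OF zeta_has_sum[OF assms(1)], of "1 / real a ^ q"] by simp
  have total: "((\<lambda>a::nat. 1 / real a ^ q * zeta p) has_sum (zeta q * zeta p)) {0<..}"
    using has_sum_cmult_left[OF zeta_has_sum[OF assms(2)]] by simp
  show ?thesis
    by (rule has_sum_SigmaI[OF _ total summable_on_SigmaI[OF _ has_sum_imp_summable[OF total]]])
      (use fibre in auto)
qed

lemma double_zeta_has_sum:
  assumes "p \<ge> 2" "q \<ge> 2"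
  shows "((\<lambda>(k1, k2). 1 / (real k1 ^ q * real k2 ^ p)) has_sum double_zeta q p)
    {(k1, k2). 0 < k1 \<and> k1 < k2}"
  unfolding double_zeta_def
  by (rule has_sum_infsum, rule summable_on_subset_banach[OF
      has_sum_imp_summable[OF zeta_mult_zeta_has_sum[OF assms]]]) auto

lemma double_zeta_star_has_sum:
  assumes "p \<ge> 2" "q \<ge> 2"
  shows "((\<lambda>(k1, k2). 1 / (real k1 ^ q * real k2 ^ p)) has_sum double_zeta_star q p)
    {(k1, k2). 0 < k1 \<and> k1 \<le> k2}"
  unfolding double_zeta_star_def
  by (rule has_sum_infsum, rule summable_on_subset_banach[OF
      has_sum_imp_summable[OF zeta_mult_zeta_has_sum[OF assms]]]) auto

lemma zeta_mult_zeta_eq_double_zeta_add_double_zeta_star: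
  assumes "p \<ge> 2" "q \<ge> 2"
  shows "zeta q * zeta p = double_zeta q p + double_zeta_star p q"
proof -
  define f where "f = (\<lambda>(a::nat, b::nat). 1 / (real a ^ q * real b ^ p))"
  have "(f has_sum double_zeta_star p q) {(a, b). 0 < b \<and> b \<le> a}"
    using double_zeta_star_has_sum[OF assms(2,1)]
    by (subst has_sum_reindex_bij_witness[where i = prod.swap and j = prod.swap])
       (auto simp: f_def mult.commute)
  hence "(f has_sum double_zeta q p + double_zeta_star p q)
      ({(a, b). 0 < a \<and> a < b} \<union> {(a, b). 0 < b \<and> b \<le> a})"
    using double_zeta_has_sum[OF assms] by (intro has_sum_Un_disjoint) (auto simp: f_def)
  moreover have "{(a, b). 0 < a \<and> a < b} \<union> {(a, b). 0 < b \<and> b \<le> a} = {0::nat<..} \<times> {0::nat<..}"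
    by auto
  ultimately have "(f has_sum double_zeta q p + double_zeta_star p q) ({0<..} \<times> {0<..})"
    by simp
  with zeta_mult_zeta_has_sum[OF assms] show ?thesis
    unfolding f_def by (rule has_sum_unique)
qed

lemma double_zeta_has_sum_shifted:
  assumes "p \<ge> 2" "q \<ge> 2"
  shows "((\<lambda>(d, k). 1 / (real d ^ q * real (k + d) ^ p)) has_sum double_zeta q p) ({0<..} \<times> {0<..})"
  using double_zeta_has_sum[OF assms]
  by (subst has_sum_reindex_bij_witness[where i = "\<lambda>(a, b). (a, b - a)" and j = "\<lambda>(d, k). (d, k + d)"])
     auto

lemma harm_telescope_has_sum:
  "((\<lambda>k. 1 / real k - 1 / real (k + d)) has_sum harm d) {0<..}"
proof -
  have "(\<lambda>k. \<Sum>i<d. 1 / real (Suc k + i) - 1 / real (Suc (Suc k) + i)) sums (\<Sum>i<d. 1 / real (Suc i))"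
  proof (rule sums_sum)
    fix i
    have "(\<lambda>k. 1 / real (Suc k + i)) \<longlonglongrightarrow> 0" by real_asymp
    from telescope_sums'[OF this]
    show "(\<lambda>k. 1 / real (Suc k + i) - 1 / real (Suc (Suc k) + i)) sums (1 / real (Suc i))"
      by simp
  qed
  moreover have "(\<Sum>i<d. 1 / real (Suc k + i) - 1 / real (Suc (Suc k) + i))
      = 1 / real (Suc k) - 1 / real (Suc k + d)" for k
    using sum_lessThan_telescope'[where f = "\<lambda>i. 1 / real (Suc k + i)"] by simp
  ultimately have "(\<lambda>k. 1 / real (Suc k) - 1 / real (Suc k + d)) sums harm d"
    by (simp add: harm_altdef divide_inverse)
  hence "((\<lambda>k. 1 / real (Suc k) - 1 / real (Suc k + d)) has_sum harm d) UNIV"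
    by (intro norm_summable_imp_has_sum) (auto simp: sums_summable frac_le)
  moreover have "bij_betw Suc UNIV {0<..}"
    by (rule bij_betwI[where g = "\<lambda>k. k - 1"]) auto
  ultimately show ?thesis
    using has_sum_reindex_bij_betw[of Suc UNIV "{0<..}" "\<lambda>k. 1 / real k - 1 / real (k + d)"] by simp
qed

lemma double_zeta_star_1_has_sum:
  assumes "N \<ge> 3"
  shows "((\<lambda>d. harm d / real d ^ N) has_sum double_zeta_star 1 N) {0<..}"
proof -
  define f where "f = (\<lambda>(l::nat, d::nat). 1 / (real l ^ 1 * real d ^ N))"
  have fibre: "((\<lambda>l. f (l, d)) has_sum harm d / real d ^ N) {1..d}" for d
    by (intro has_sum_finiteI) (auto simp: f_def harm_def divide_inverse sum_distrib_right)
  have summable: "(\<lambda>d. harm d / real d ^ N) summable_on {0<..}"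
  proof (rule summable_on_comparison_test)
    show "(\<lambda>d::nat. 1 / real d ^ (N - 1)) summable_on {0<..}"
      using has_sum_imp_summable[OF zeta_has_sum[of "N - 1"]] assms by simp
    fix d :: nat assume "d \<in> {0<..}"
    have "harm d \<le> real d"
      unfolding harm_altdef by (rule order.trans[OF sum_mono[where g = "\<lambda>_. 1"]]) (auto simp: inverse_le_1_iff)
    hence "harm d / real d ^ N \<le> real d / real d ^ N"
      by (simp add: divide_right_mono)
    also have "\<dots> = 1 / real d ^ (N - 1)"
      using \<open>d \<in> {0<..}\<close> assms by (cases N) simp_all
    finally show "harm d / real d ^ N \<le> 1 / real d ^ (N - 1)" .
  qed (simp add: harm_nonneg)
  have "((\<lambda>(d, l). f (l, d)) has_sum infsum (\<lambda>d. harm d / real d ^ N) {0<..}) (Sigma {0<..} (\<lambda>d. {1..d}))"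
    by (rule has_sum_SigmaI[OF _ _ summable_on_SigmaI[OF _ summable]])
       (use fibre summable in \<open>auto simp: f_def\<close>)
  hence "(f has_sum infsum (\<lambda>d. harm d / real d ^ N) {0<..}) {(l, d). 0 < l \<and> l \<le> d}"
    by (subst (asm) has_sum_reindex_bij_witness[where i = prod.swap and j = prod.swap]) auto
  hence "double_zeta_star 1 N = infsum (\<lambda>d. harm d / real d ^ N) {0<..}"
    unfolding double_zeta_star_def f_def by (rule infsumI)
  with summable show ?thesis by simp
qed

lemma double_zeta_star_1_has_sum_telescope:
  assumes "N \<ge> 3"
  shows "((\<lambda>(d, k). (1 / real k - 1 / real (k + d)) / real d ^ N) has_sum double_zeta_star 1 N)
    ({0<..} \<times> {0<..})"
proof -
  have fibre: "((\<lambda>k. (1 / real k - 1 / real (k + d)) / real d ^ N) has_sum harm d / real d ^ N) {0<..}"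
    for d
    using has_sum_cmult_right[OF harm_telescope_has_sum[of d], of "1 / real d ^ N"] by simp
  note total = double_zeta_star_1_has_sum[OF assms]
  show ?thesis
    by (rule has_sum_SigmaI[OF _ total summable_on_SigmaI[OF _ has_sum_imp_summable[OF total]]])
       (use fibre in \<open>auto simp: frac_le\<close>)
qed

lemma double_zeta_partial_fraction_expansion:
  assumes "a \<ge> 1" "b \<ge> 1"
  shows "double_zeta (Suc a) (Suc b) =
    (\<Sum>i<a. (-1) ^ i * real ((b + i) choose i) * (zeta (Suc b + i) * zeta (Suc a - i)))
    + (-1) ^ Suc a * (\<Sum>j<b. real ((a + j) choose j) * double_zeta (Suc a + j) (Suc b - j))
    + (-1) ^ a * real ((a + b) choose a) * double_zeta_star 1 (a + b + 1)"
  (is "_ = ?A + ?B + ?C")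
proof -
  define P where "P = {0::nat<..} \<times> {0::nat<..}"
  have A: "((\<lambda>x. \<Sum>i<a. (-1) ^ i * real ((b + i) choose i) *
      (case x of (d, k) \<Rightarrow> 1 / (real d ^ (Suc b + i) * real k ^ (Suc a - i)))) has_sum ?A) P"
    unfolding P_def using assms
    by (intro has_sum_sum has_sum_cmult_right zeta_mult_zeta_has_sum) auto
  have B: "((\<lambda>x. (-1) ^ Suc a * (\<Sum>j<b. real ((a + j) choose j) *
      (case x of (d, k) \<Rightarrow> 1 / (real d ^ (Suc a + j) * real (k + d) ^ (Suc b - j))))) has_sum ?B) P"
    unfolding P_def using assms
    by (intro has_sum_cmult_right has_sum_sum double_zeta_has_sum_shifted) auto
  have C: "((\<lambda>x. (-1) ^ a * real ((a + b) choose a) *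
      (case x of (d, k) \<Rightarrow> (1 / real k - 1 / real (k + d)) / real d ^ (a + b + 1))) has_sum ?C) P"
    unfolding P_def using assms
    by (intro has_sum_cmult_right double_zeta_star_1_has_sum_telescope) auto
  have "((\<lambda>(d, k). 1 / (real k ^ Suc a * real (k + d) ^ Suc b)) has_sum ?A + ?B + ?C) P"
    using has_sum_add[OF has_sum_add[OF A B] C]
    by (rule has_sum_cong[THEN iffD1, rotated])
       (auto simp only: P_def mem_Times_iff greaterThan_iff prod.case split_paired_all fst_conv snd_conv
         intro!: partial_fraction_split[symmetric])
  moreover have "((\<lambda>(d, k). 1 / (real k ^ Suc a * real (k + d) ^ Suc b))
      has_sum double_zeta (Suc a) (Suc b)) P"
    unfolding P_def using double_zeta_has_sum[of "Suc b" "Suc a"] assms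
    by (subst has_sum_reindex_bij_witness[where i = "\<lambda>(k1, k2). (k2 - k1, k1)" and j = "\<lambda>(d, k). (k, k + d)"])
       auto
  ultimately show ?thesis by (rule has_sum_unique[symmetric])
qed

lemma sum_smult_zeta_sh:
  "(\<Sum>i<Suc a. smult (f i) (zeta_sh (Suc a - i)))
    = [:\<Sum>i<a. f i * zeta (Suc a - i):] + smult (f a) [:0, 1:]"
proof -
  have "(\<Sum>i<a. smult (f i) (zeta_sh (Suc a - i))) = (\<Sum>i<a. [:f i * zeta (Suc a - i):])"
    by (intro sum.cong) (auto simp: zeta_sh_eq_const)
  thus ?thesis by (simp add: sum_to_poly zeta_sh_1 [unfolded One_nat_def])
qed

lemma sum_smult_zeta_sh_diff_double_zeta_star:
  assumes "m \<ge> 2"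
  shows "(\<Sum>j<Suc b. smult (g j)
      (smult (zeta (m + j)) (zeta_sh (Suc b - j)) - [:double_zeta_star (Suc b - j) (m + j):]))
    = [:\<Sum>j<b. g j * double_zeta (m + j) (Suc b - j):]
      + smult (g b) (smult (zeta (m + b)) [:0, 1:] - [:double_zeta_star 1 (m + b):])"
proof -
  have "(\<Sum>j<b. smult (g j)
      (smult (zeta (m + j)) (zeta_sh (Suc b - j)) - [:double_zeta_star (Suc b - j) (m + j):]))
    = (\<Sum>j<b. [:g j * double_zeta (m + j) (Suc b - j):])"
  proof (intro sum.cong refl)
    fix j assume "j \<in> {..<b}"
    with assms have "zeta (m + j) * zeta (Suc b - j) - double_zeta_star (Suc b - j) (m + j)
        = double_zeta (m + j) (Suc b - j)"
      using zeta_mult_zeta_eq_double_zeta_add_double_zeta_star[of "Suc b - j" "m + j"] by simp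
    with \<open>j \<in> {..<b}\<close> show "smult (g j) (smult (zeta (m + j)) (zeta_sh (Suc b - j))
        - [:double_zeta_star (Suc b - j) (m + j):]) = [:g j * double_zeta (m + j) (Suc b - j):]"
      by (simp add: zeta_sh_eq_const diff_to_poly)
  qed
  thus ?thesis by (simp add: sum_to_poly zeta_sh_1 [unfolded One_nat_def])
qed

theorem theorem2p3:
  fixes m n :: nat
  assumes "m > 1" and "n > 1"
  shows "[: double_zeta m n :] =
    (\<Sum>i<m. smult ((-1) ^ i * real ((n + i - 1) choose i) * zeta (n + i)) (zeta_sh (m - i)))
    + smult ((-1) ^ m)
        (\<Sum>j<n. smult (real ((m + j - 1) choose j))
           (smult (zeta (m + j)) (zeta_sh (n - j)) - [: double_zeta_star (n - j) (m + j) :]))"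
proof -
  obtain a b where m: "m = Suc a" "a \<ge> 1" and n: "n = Suc b" "b \<ge> 1"
    using assms by (cases m; cases n) auto
  have "m \<ge> 2" using assms(1) by simp
  have choose_sym: "(a + b) choose b = (a + b) choose a"
    using binomial_symmetric[of b "a + b"] by simp
  have L: "(\<Sum>i<m. smult ((-1) ^ i * real ((n + i - 1) choose i) * zeta (n + i)) (zeta_sh (m - i)))
      = [:\<Sum>i<a. (-1) ^ i * real ((b + i) choose i) * zeta (Suc b + i) * zeta (Suc a - i):]
        + smult ((-1) ^ a * real ((a + b) choose a) * zeta (a + b + 1)) [:0, 1:]"
    unfolding m(1) sum_smult_zeta_sh by (simp add: n add_ac)
  have R: "(\<Sum>j<n. smult (real ((m + j - 1) choose j))
           (smult (zeta (m + j)) (zeta_sh (n - j)) - [: double_zeta_star (n - j) (m + j) :]))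
      = [:\<Sum>j<b. real ((a + j) choose j) * double_zeta (Suc a + j) (Suc b - j):]
        + smult (real ((a + b) choose a))
            (smult (zeta (a + b + 1)) [:0, 1:] - [:double_zeta_star 1 (a + b + 1):])"
    unfolding n(1) sum_smult_zeta_sh_diff_double_zeta_star[OF \<open>m \<ge> 2\<close>]
    using choose_sym by (simp add: m add_ac)
  show ?thesis
    unfolding L R
    by (simp add: m(1) n(1) double_zeta_partial_fraction_expansion[OF m(2) n(2)] algebra_simps)
qed

end
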